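(* Let $\mathbb{G}$ be a finitely generated abelian group, $A$ a commutative ring, and $B=A[T_1,\dots,T_r]$ a $\mathbb{G}$-graded polynomial ring over $A$ (with $A$ in degree $0$ and each $T_i$ homogeneous). Let $\mathbb{M}$ be a finitely generated $\mathbb{G}$-graded $B$-module. Let $\Gamma$ be the set of subsets of $\{\deg_{\mathbb{G}}(T_i)\}_{i=1}^r$ that are linearly independent. Then there exist finitely many pairs $(\delta_p,E_p)\in\mathbb{G}\times\Gamma$, $p=1,\dots,m$, such that $$\operatorname{supp}_{\mathbb{G}}(\mathbb{M})=\bigcup_{p=1}^m\big(\delta_p+\langle E_p\rangle\big),$$ where $\langle E_p\rangle$ denotes the submonoid of $\mathbb{G}$ generated by $E_p$.
   Context: A subset $E$ of an abelian group is linearly independent if it forms a basis of a free submonoid, i.e. the map $\mathbb{N}^{(E)}\to\mathbb{G}$, $(c_e)\mapsto\sum_e c_e e$, is injective (the empty set is allowed, with $\langle\emptyset\rangle=\{0\}$). $\operatorname{supp}_{\mathbb{G}}(\mathbb{M})=\{\gamma\in\mathbb{G}:\mathbb{M}_\gamma\neq 0\}$. *)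

theory Defs
  imports Main "HOL.Modules" "HOL-Library.Poly_Mapping"
begin

primrec nmul :: "nat \<Rightarrow> 'g::monoid_add \<Rightarrow> 'g" where
  "nmul 0 g = 0"
| "nmul (Suc n) g = g + nmul n g"

inductive_set submonoid_gen :: "'g::monoid_add set \<Rightarrow> 'g set" for E where
  zero: "0 \<in> submonoid_gen E"
| step: "x \<in> submonoid_gen E \<Longrightarrow> e \<in> E \<Longrightarrow> x + e \<in> submonoid_gen E"

text \<open>Finitely generated abelian group: generated as a monoid by a finite S together with -S,
  i.e. generated as a group by the finite set S.\<close>
definition fg_abelian_group :: "'g::ab_group_add itself \<Rightarrow> bool" where
  "fg_abelian_group _ \<longleftrightarrow> (\<exists>S::'g set. finite S \<and> submonoid_gen (S \<union> uminus ` S) = UNIV)"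

definition lin_indep :: "'g::comm_monoid_add set \<Rightarrow> bool" where
  "lin_indep E \<longleftrightarrow>
     (\<forall>c d :: 'g \<Rightarrow> nat.
        finite {e. c e \<noteq> 0} \<and> finite {e. d e \<noteq> 0} \<and>
        {e. c e \<noteq> 0} \<subseteq> E \<and> {e. d e \<noteq> 0} \<subseteq> E \<and>
        (\<Sum>e\<in>{e. c e \<noteq> 0}. nmul (c e) e) = (\<Sum>e\<in>{e. d e \<noteq> 0}. nmul (d e) e)
        \<longrightarrow> c = d)"

text \<open>Polynomial ring A[T_v | v :: 'v] is the type of finitely supported maps from monomials to a.
  G-degree of a monomial, given the degrees deg v of the variables T_v.\<close>
definition mdeg :: "('v \<Rightarrow> 'g::comm_monoid_add) \<Rightarrow> ('v \<Rightarrow>\<^sub>0 nat) \<Rightarrow> 'g" where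
  "mdeg deg m = (\<Sum>v\<in>Poly_Mapping.keys m. nmul (Poly_Mapping.lookup m v) (deg v))"

definition hom_poly :: "('v \<Rightarrow> 'g::comm_monoid_add) \<Rightarrow> 'g \<Rightarrow> (('v \<Rightarrow>\<^sub>0 nat) \<Rightarrow>\<^sub>0 'a::zero) set" where
  "hom_poly deg \<gamma> = {p. \<forall>m\<in>Poly_Mapping.keys p. mdeg deg m = \<gamma>}"

definition graded_module ::
  "('v \<Rightarrow> 'g::comm_monoid_add) \<Rightarrow> ((('v \<Rightarrow>\<^sub>0 nat) \<Rightarrow>\<^sub>0 'a::comm_ring_1) \<Rightarrow> 'm \<Rightarrow> 'm::ab_group_add)
     \<Rightarrow> ('g \<Rightarrow> 'm set) \<Rightarrow> bool" where
  "graded_module deg scale Mg \<longleftrightarrow>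
     module scale \<and>
     (\<forall>\<gamma>. 0 \<in> Mg \<gamma> \<and> (\<forall>x\<in>Mg \<gamma>. \<forall>y\<in>Mg \<gamma>. x + y \<in> Mg \<gamma> \<and> - x \<in> Mg \<gamma>)) \<and>
     (\<forall>\<gamma> \<delta> b x. b \<in> hom_poly deg \<gamma> \<longrightarrow> x \<in> Mg \<delta> \<longrightarrow> scale b x \<in> Mg (\<gamma> + \<delta>)) \<and>
     (\<forall>x. \<exists>!f. finite {\<gamma>. f \<gamma> \<noteq> 0} \<and> (\<forall>\<gamma>. f \<gamma> \<in> Mg \<gamma>) \<and> x = (\<Sum>\<gamma>\<in>{\<gamma>. f \<gamma> \<noteq> 0}. f \<gamma>))"

definition fg_module :: "('r::comm_ring_1 \<Rightarrow> 'm \<Rightarrow> 'm::ab_group_add) \<Rightarrow> bool" where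
  "fg_module scale \<longleftrightarrow> (\<exists>X. finite X \<and> module.span scale X = UNIV)"

definition graded_supp :: "('g \<Rightarrow> 'm::zero set) \<Rightarrow> 'g set" where
  "graded_supp Mg = {\<gamma>. Mg \<gamma> \<noteq> {0}}"

end

theory Submission
  imports Defs "HOL.Topological_Spaces"
begin

text \<open>
  Pick finitely many homogeneous generators \<open>h\<close> of \<open>\<M>\<close>. For each of them the exponent vectors
  \<open>t\<close> with \<open>T\<^sup>t h \<noteq> 0\<close> form a downward closed subset of \<open>\<nat>\<^sup>r\<close>; by Dickson's lemma it is the
  complement of finitely many upward cones, hence a finite union of boxes in which some coordinates
  are fixed and the others are free. The degree map sends such a box onto a translate of the
  submonoid generated by the degrees of the free variables, and \<open>supp(\<M>)\<close> is the union of
  these translates shifted by \<open>deg h\<close>. Finally, if a finite set \<open>F\<close> satisfies a nontrivial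
  relation \<open>\<Sum> a\<^sub>e e = \<Sum> b\<^sub>e e\<close> with disjoint supports, every element of \<open>\<langle>F\<rangle>\<close> can be rewritten
  until some coefficient \<open>n\<^sub>e\<close> drops below \<open>a\<^sub>e\<close>, so \<open>\<langle>F\<rangle>\<close> is a finite union of translates
  of \<open>\<langle>F - {e}\<rangle>\<close>; induction on \<open>|F|\<close> leaves only linearly independent generating sets.
\<close>

lemma nmul_add: "nmul (m + n) g = nmul m g + nmul n (g::'g::comm_monoid_add)"
  by (induction m) (simp_all add: add.assoc)

lemma sum_nmul_add:
  "(\<Sum>i\<in>I. nmul (m i + n i) (g i)) =
     (\<Sum>i\<in>I. nmul (m i) (g i)) + (\<Sum>i\<in>I. nmul (n i) (g i :: 'g::comm_monoid_add))"
  by (simp add: nmul_add sum.distrib)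

lemma submonoid_gen_add:
  assumes "x \<in> submonoid_gen E" "y \<in> submonoid_gen E"
  shows "x + y \<in> submonoid_gen (E::'g::comm_monoid_add set)"
  using assms(2)
proof induction
  case zero
  show ?case using assms(1) by simp
next
  case (step y e)
  then show ?case by (metis add.assoc submonoid_gen.step)
qed

lemma submonoid_gen_mono: "E \<subseteq> F \<Longrightarrow> submonoid_gen E \<subseteq> submonoid_gen F"
proof
  fix x assume "E \<subseteq> F" "x \<in> submonoid_gen E"
  from this(2) show "x \<in> submonoid_gen F"
    by induction (use \<open>E \<subseteq> F\<close> in \<open>auto intro: submonoid_gen.intros\<close>)
qed

lemma submonoid_gen_nmul: "e \<in> E \<Longrightarrow> nmul n e \<in> submonoid_gen (E::'g::comm_monoid_add set)"
  by (induction n)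
    (auto intro: submonoid_gen.zero submonoid_gen_add submonoid_gen.step[OF submonoid_gen.zero, simplified])

lemma submonoid_gen_sum:
  "(\<And>i. i \<in> I \<Longrightarrow> f i \<in> submonoid_gen E) \<Longrightarrow> sum f I \<in> submonoid_gen (E::'g::comm_monoid_add set)"
  by (induction I rule: infinite_finite_induct) (auto intro: submonoid_gen.zero submonoid_gen_add)

lemma submonoid_gen_image:
  fixes g :: "'i \<Rightarrow> 'g::comm_monoid_add"
  assumes "finite I"
  shows "submonoid_gen (g ` I) = range (\<lambda>c. \<Sum>i\<in>I. nmul (c i) (g i))"
proof
  show "submonoid_gen (g ` I) \<subseteq> range (\<lambda>c. \<Sum>i\<in>I. nmul (c i) (g i))"
  proof
    fix x assume "x \<in> submonoid_gen (g ` I)"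
    then show "x \<in> range (\<lambda>c. \<Sum>i\<in>I. nmul (c i) (g i))"
    proof induction
      case zero
      show ?case by (rule range_eqI[of _ _ "\<lambda>_. 0"]) simp
    next
      case (step x e)
      then obtain c i where x: "x = (\<Sum>j\<in>I. nmul (c j) (g j))" and i: "i \<in> I" "e = g i"
        by blast
      have "(\<Sum>j\<in>I. nmul (if j = i then 1 else 0) (g j)) = (\<Sum>j\<in>I. if j = i then g j else 0)"
        by (intro sum.cong) auto
      also have "\<dots> = e" using assms i by simp
      finally have "x + e = (\<Sum>j\<in>I. nmul (c j + (if j = i then 1 else 0)) (g j))"
        by (simp only: x sum_nmul_add)
      then show ?case by (rule range_eqI[where x = "\<lambda>j. c j + (if j = i then 1 else 0)"])
    qed
  qed
  show "range (\<lambda>c. \<Sum>i\<in>I. nmul (c i) (g i)) \<subseteq> submonoid_gen (g ` I)"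
    by (auto intro!: submonoid_gen_sum submonoid_gen_nmul)
qed

definition cone_decomposable :: "'g::comm_monoid_add set \<Rightarrow> 'g set \<Rightarrow> bool" where
  "cone_decomposable D X \<longleftrightarrow> (\<exists>P :: ('g \<times> 'g set) set. finite P \<and>
     (\<forall>(\<delta>, E)\<in>P. E \<subseteq> D \<and> lin_indep E) \<and>
     X = (\<Union>(\<delta>, E)\<in>P. (\<lambda>x. \<delta> + x) ` submonoid_gen E))"

lemma cone_decomposable_submonoid_gen_lin_indep:
  "E \<subseteq> D \<Longrightarrow> lin_indep E \<Longrightarrow> cone_decomposable D (submonoid_gen E)"
  unfolding cone_decomposable_def by (intro exI[of _ "{(0, E)}"]) auto

lemma cone_decomposable_translate:
  assumes "cone_decomposable D X"
  shows "cone_decomposable D ((\<lambda>x. d + x) ` X)"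
proof -
  obtain P where P: "finite P" "\<forall>(\<delta>, E)\<in>P. E \<subseteq> D \<and> lin_indep E"
    "X = (\<Union>(\<delta>, E)\<in>P. (\<lambda>x. \<delta> + x) ` submonoid_gen E)"
    using assms unfolding cone_decomposable_def by blast
  let ?P = "(\<lambda>(\<delta>, E). (d + \<delta>, E)) ` P"
  have "(\<lambda>x. d + x) ` X = (\<Union>(\<delta>, E)\<in>?P. (\<lambda>x. \<delta> + x) ` submonoid_gen E)"
    unfolding P(3) image_UN by (simp add: image_image add.assoc case_prod_beta)
  then show ?thesis
    unfolding cone_decomposable_def using P(1,2) by (intro exI[of _ ?P]) auto
qed

lemma cone_decomposable_UN:
  assumes "finite I" "\<And>i. i \<in> I \<Longrightarrow> cone_decomposable D (X i)"
  shows "cone_decomposable D (\<Union>i\<in>I. X i)"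
proof -
  have "\<forall>i\<in>I. \<exists>P. finite P \<and> (\<forall>(\<delta>, E)\<in>P. E \<subseteq> D \<and> lin_indep E) \<and>
      X i = (\<Union>(\<delta>, E)\<in>P. (\<lambda>x. \<delta> + x) ` submonoid_gen E)"
    using assms(2) unfolding cone_decomposable_def by blast
  then obtain P where P: "\<forall>i\<in>I. finite (P i) \<and> (\<forall>(\<delta>, E)\<in>P i. E \<subseteq> D \<and> lin_indep E) \<and>
      X i = (\<Union>(\<delta>, E)\<in>P i. (\<lambda>x. \<delta> + x) ` submonoid_gen E)"
    by (rule bchoice[THEN exE])
  have "(\<Union>i\<in>I. X i) = (\<Union>(\<delta>, E)\<in>(\<Union>i\<in>I. P i). (\<lambda>x. \<delta> + x) ` submonoid_gen E)"
    using P by (simp add: UN_UN_flatten)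
  then show ?thesis
    unfolding cone_decomposable_def using P assms(1) by (intro exI[of _ "\<Union>i\<in>I. P i"]) auto
qed

lemma submonoid_gen_cover_by_relation:
  fixes F :: "'g::comm_monoid_add set" and a b :: "'g \<Rightarrow> nat"
  assumes "finite F"
    and disjoint: "\<forall>e\<in>F. 0 < a e \<longrightarrow> b e = 0"
    and relation: "(\<Sum>e\<in>F. nmul (a e) e) = (\<Sum>e\<in>F. nmul (b e) e)"
    and "e0 \<in> F" "0 < a e0"
  shows "submonoid_gen F \<subseteq>
    (\<Union>e\<in>{e\<in>F. 0 < a e}. \<Union>j<a e. (\<lambda>x. nmul j e + x) ` submonoid_gen (F - {e}))"
    (is "_ \<subseteq> ?R")
proof
  let ?A = "{e\<in>F. 0 < a e}"
  have main: "(\<Sum>e\<in>F. nmul (n e) e) \<in> ?R" for n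
  proof (induction "\<Sum>e\<in>?A. n e" arbitrary: n rule: less_induct)
    case less
    show ?case
    proof (cases "\<exists>e\<in>?A. n e < a e")
      case True
      then obtain e where e: "e \<in> F" "n e < a e" by auto
      have "(\<Sum>e'\<in>F. nmul (n e') e') = nmul (n e) e + (\<Sum>e'\<in>F - {e}. nmul (n e') e')"
        using \<open>finite F\<close> e(1) by (simp add: sum.remove)
      moreover have "(\<Sum>e'\<in>F - {e}. nmul (n e') e') \<in> submonoid_gen (F - {e})"
        by (auto intro: submonoid_gen_sum submonoid_gen_nmul)
      moreover have "e \<in> ?A" "n e \<in> {..<a e}" using e by auto
      ultimately show ?thesis by blast
    next
      case False
      \<comment> \<open>subtract the left side of the relation and add its right side\<close>
      define n' where "n' e = (n e - a e) + b e" for e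
      have "n e = (n e - a e) + a e" if "e \<in> F" for e
        using False that by (cases "a e = 0") auto
      then have "(\<Sum>e\<in>F. nmul (n e) e) = (\<Sum>e\<in>F. nmul ((n e - a e) + a e) e)"
        by (intro sum.cong) auto
      also have "\<dots> = (\<Sum>e\<in>F. nmul (n' e) e)"
        by (simp only: n'_def sum_nmul_add relation)
      finally have same: "(\<Sum>e\<in>F. nmul (n e) e) = (\<Sum>e\<in>F. nmul (n' e) e)" .
      have decrease: "(\<Sum>e\<in>?A. n' e) < (\<Sum>e\<in>?A. n e)"
      proof (rule sum_strict_mono_ex1)
        show "\<forall>e\<in>?A. n' e \<le> n e" using disjoint by (auto simp: n'_def)
        show "\<exists>e\<in>?A. n' e < n e"
          using assms(4,5) disjoint False by (intro bexI[of _ e0]) (auto simp: n'_def)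
      qed (use \<open>finite F\<close> in simp)
      show ?thesis using less[OF decrease] same by simp
    qed
  qed
  fix x assume "x \<in> submonoid_gen F"
  then obtain n where "x = (\<Sum>e\<in>F. nmul (n e) e)"
    using submonoid_gen_image[OF \<open>finite F\<close>, of id] by auto
  with main show "x \<in> ?R" by simp
qed

lemma not_lin_indep_relation:
  fixes F :: "'g::cancel_comm_monoid_add set"
  assumes "finite F" "\<not> lin_indep F"
  obtains a b :: "'g \<Rightarrow> nat" and e0
  where "\<forall>e\<in>F. 0 < a e \<longrightarrow> b e = 0" "(\<Sum>e\<in>F. nmul (a e) e) = (\<Sum>e\<in>F. nmul (b e) e)"
    "e0 \<in> F" "0 < a e0"
proof -
  obtain c d :: "'g \<Rightarrow> nat" where cd: "{e. c e \<noteq> 0} \<subseteq> F" "{e. d e \<noteq> 0} \<subseteq> F"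
    "(\<Sum>e\<in>{e. c e \<noteq> 0}. nmul (c e) e) = (\<Sum>e\<in>{e. d e \<noteq> 0}. nmul (d e) e)" "c \<noteq> d"
    using assms unfolding lin_indep_def by blast
  have on_F: "(\<Sum>e\<in>{e. f e \<noteq> 0}. nmul (f e) e) = (\<Sum>e\<in>F. nmul (f e) e)"
    if "{e. f e \<noteq> 0} \<subseteq> F" for f :: "'g \<Rightarrow> nat"
    by (rule sum.mono_neutral_left) (use assms(1) that in auto)
  define m where "m e = min (c e) (d e)" for e
  have "c e - d e + m e = c e" "d e - c e + m e = d e" for e
    by (simp_all add: m_def)
  then have "(\<Sum>e\<in>F. nmul (c e - d e) e) + (\<Sum>e\<in>F. nmul (m e) e)
      = (\<Sum>e\<in>F. nmul (d e - c e) e) + (\<Sum>e\<in>F. nmul (m e) e)"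
    using cd(3) on_F[OF cd(1)] on_F[OF cd(2)] by (simp only: sum_nmul_add[symmetric])
  then have relation: "(\<Sum>e\<in>F. nmul (c e - d e) e) = (\<Sum>e\<in>F. nmul (d e - c e) e)"
    by simp
  obtain e1 where e1: "c e1 \<noteq> d e1"
    using cd(4) by blast
  then have "e1 \<in> F"
    using cd(1,2) by (cases "c e1 = 0") auto
  show thesis
  proof (cases "d e1 < c e1")
    case True
    show thesis
      by (rule that[of "\<lambda>e. c e - d e" "\<lambda>e. d e - c e" e1]) (use True relation \<open>e1 \<in> F\<close> in auto)
  next
    case False
    with e1 have "c e1 < d e1" by simp
    show thesis
      by (rule that[of "\<lambda>e. d e - c e" "\<lambda>e. c e - d e" e1])
        (use \<open>c e1 < d e1\<close> relation \<open>e1 \<in> F\<close> in auto)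
  qed
qed

lemma cone_decomposable_submonoid_gen:
  fixes F :: "'g::cancel_comm_monoid_add set"
  assumes "finite F" "F \<subseteq> D"
  shows "cone_decomposable D (submonoid_gen F)"
  using assms
proof (induction "card F" arbitrary: F rule: less_induct)
  case less
  show ?case
  proof (cases "lin_indep F")
    case True
    then show ?thesis using less.prems by (intro cone_decomposable_submonoid_gen_lin_indep)
  next
    case False
    then obtain a b :: "'g \<Rightarrow> nat" and e0 where ab: "\<forall>e\<in>F. 0 < a e \<longrightarrow> b e = 0"
      "(\<Sum>e\<in>F. nmul (a e) e) = (\<Sum>e\<in>F. nmul (b e) e)" "e0 \<in> F" "0 < a e0"
      using not_lin_indep_relation less.prems(1) by blast
    let ?R = "\<Union>e\<in>{e\<in>F. 0 < a e}. \<Union>j<a e. (\<lambda>x. nmul j e + x) ` submonoid_gen (F - {e})"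
    have "?R \<subseteq> submonoid_gen F"
      using submonoid_gen_mono[of "F - {_}" F]
      by (auto intro!: submonoid_gen_add submonoid_gen_nmul)
    then have "submonoid_gen F = ?R"
      using submonoid_gen_cover_by_relation[OF less.prems(1) ab] by blast
    moreover have "cone_decomposable D ?R"
    proof (intro cone_decomposable_UN cone_decomposable_translate less.hyps)
      fix e assume "e \<in> {e\<in>F. 0 < a e}"
      then show "card (F - {e}) < card F"
        using less.prems(1) by (intro card_Diff1_less) auto
    qed (use less.prems in auto)
    ultimately show ?thesis by simp
  qed
qed

lemma nat_seq_mono_subseq:
  fixes g :: "nat \<Rightarrow> nat"
  obtains r :: "nat \<Rightarrow> nat" where "strict_mono r" "mono (\<lambda>n. g (r n))"
proof -
  obtain f where f: "strict_mono f" "monoseq (\<lambda>n. g (f n))"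
    using seq_monosub by blast
  show thesis
  proof (cases "mono (\<lambda>n. g (f n))")
    case True
    with f(1) show thesis by (rule that)
  next
    case False
    then have antitone: "g (f n) \<le> g (f m)" if "m \<le> n" for m n
      using f(2) that unfolding monoseq_def mono_def by blast
    obtain N where N: "\<And>n. g (f N) \<le> g (f n)"
      using ex_has_least_nat[of "\<lambda>_. True" 0 "\<lambda>n. g (f n)"] by blast
    \<comment> \<open>a nonincreasing sequence of naturals is constant from its minimum on\<close>
    have "g (f (n + N)) = g (f N)" for n
      using antitone[of N "n + N"] N[of "n + N"] by simp
    then show thesis
      using f(1) by (intro that[of "\<lambda>n. f (n + N)"]) (auto simp: strict_mono_def mono_def)
  qed
qed

lemma coordinatewise_mono_subseq:
  fixes f :: "nat \<Rightarrow> 'v \<Rightarrow> nat"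
  assumes "finite K"
  shows "\<exists>r :: nat \<Rightarrow> nat. strict_mono r \<and> (\<forall>v\<in>K. mono (\<lambda>i. f (r i) v))"
  using assms
proof (induction K)
  case empty
  show ?case by (intro exI[of _ id]) (simp add: strict_mono_def)
next
  case (insert v K)
  then obtain r :: "nat \<Rightarrow> nat" where r: "strict_mono r" "\<forall>w\<in>K. mono (\<lambda>i. f (r i) w)"
    by blast
  obtain r' :: "nat \<Rightarrow> nat" where r': "strict_mono r'" "mono (\<lambda>i. f (r (r' i)) v)"
    by (rule nat_seq_mono_subseq)
  have "mono (\<lambda>i. f (r (r' i)) w)" if "w \<in> K" for w
    using r(2) that strict_mono_mono[OF r'(1)] by (auto simp: mono_def)
  moreover have "strict_mono (\<lambda>i. r (r' i))"
    using r(1) r'(1) by (simp add: strict_mono_def)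
  ultimately show ?case using r' by blast
qed

lemma dickson:
  fixes f :: "nat \<Rightarrow> 'v::finite \<Rightarrow> nat"
  obtains i j where "i < j" "f i \<le> f j"
proof -
  obtain r :: "nat \<Rightarrow> nat" where r: "strict_mono r" "\<forall>v. mono (\<lambda>i. f (r i) v)"
    using coordinatewise_mono_subseq[of UNIV f] by auto
  have "f (r 0) \<le> f (r 1)"
    using r(2) by (auto simp: le_fun_def mono_def)
  moreover have "r 0 < r 1"
    using r(1) by (simp add: strict_mono_def)
  ultimately show thesis by (rule that[rotated])
qed

definition minimals :: "'a::order set \<Rightarrow> 'a set" where
  "minimals U = {u\<in>U. \<forall>u'\<in>U. u' \<le> u \<longrightarrow> u' = u}"

lemma finite_minimals: "finite (minimals (U :: ('v::finite \<Rightarrow> nat) set))"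
proof (rule ccontr)
  assume "infinite (minimals U)"
  then obtain f :: "nat \<Rightarrow> _" where f: "inj f" "range f \<subseteq> minimals U"
    using infinite_countable_subset by blast
  obtain i j where "i < j" "f i \<le> f j"
    using dickson[of f] by blast
  moreover have "f j \<in> minimals U" "f i \<in> U"
    using f(2) unfolding minimals_def by auto
  ultimately have "f i = f j" "i \<noteq> j"
    unfolding minimals_def by auto
  with f(1) show False by (simp add: inj_eq)
qed

lemma minimals_below:
  fixes U :: "('v::finite \<Rightarrow> nat) set"
  shows "u \<in> U \<Longrightarrow> \<exists>m\<in>minimals U. m \<le> u"
proof (induction "sum u UNIV" arbitrary: u rule: less_induct)
  case less
  show ?case
  proof (cases "u \<in> minimals U")
    case True
    then show ?thesis by auto
  next
    case False
    then obtain u' where u': "u' \<in> U" "u' \<le> u" "u' \<noteq> u"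
      using less.prems unfolding minimals_def by auto
    have "sum u' UNIV < sum u UNIV"
    proof (rule sum_strict_mono_ex1)
      show "\<forall>x\<in>UNIV. u' x \<le> u x" using u'(2) by (simp add: le_fun_def)
      then show "\<exists>x\<in>UNIV. u' x < u x" using u'(3) by (auto simp: fun_eq_iff order.strict_iff_order)
    qed simp
    then obtain m where "m \<in> minimals U" "m \<le> u'"
      using less.hyps u'(1) by blast
    then show ?thesis using u'(2) order_trans by blast
  qed
qed

lemma downclosed_eq_avoid_minimals:
  fixes S :: "('v::finite \<Rightarrow> nat) set"
  assumes "\<And>t s. t \<in> S \<Longrightarrow> s \<le> t \<Longrightarrow> s \<in> S"
  shows "S = {t. \<forall>m\<in>minimals (- S). \<not> m \<le> t}"
  using assms minimals_below[of _ "- S"] unfolding minimals_def by blast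

definition box :: "'v set \<Rightarrow> ('v \<Rightarrow> nat) \<Rightarrow> ('v \<Rightarrow> nat) set" where
  "box W a = {t. \<forall>w\<in>W. t w = a w}"

lemma avoid_finite_eq_UN_box:
  fixes M :: "('v::finite \<Rightarrow> nat) set"
  assumes "finite M"
  shows "\<exists>Q. finite Q \<and> {t. \<forall>m\<in>M. \<not> m \<le> t} = (\<Union>(W, a)\<in>Q. box W a)"
  using assms
proof (induction M)
  case empty
  show ?case by (intro exI[of _ "{({}, \<lambda>_. 0)}"]) (auto simp: box_def)
next
  case (insert u M)
  then obtain Q where Q: "finite Q" "{t. \<forall>m\<in>M. \<not> m \<le> t} = (\<Union>(W, a)\<in>Q. box W a)"
    by blast
  \<comment> \<open>avoiding \<open>u\<close> means \<open>t v < u v\<close> for some \<open>v\<close>: refine each box by fixing such a coordinate\<close>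
  define Z where "Z = {((W, a), v, j). (W, a) \<in> Q \<and> j < u v \<and> (v \<notin> W \<or> a v = j)}"
  define Q' where "Q' = (\<lambda>((W, a), v, j). (insert v W, a(v := j))) ` Z"
  have "Z \<subseteq> Q \<times> (SIGMA v:UNIV. {..<u v})"
    unfolding Z_def by auto
  moreover have "finite (Q \<times> (SIGMA v:UNIV. {..<u v}))"
    using Q(1) by auto
  ultimately have "finite Z"
    by (rule finite_subset)
  then have "finite Q'"
    unfolding Q'_def by (rule finite_imageI)
  moreover have "{t. \<forall>m\<in>insert u M. \<not> m \<le> t} = (\<Union>(W, a)\<in>Q'. box W a)"
  proof (intro set_eqI iffI)
    fix t assume t: "t \<in> {t. \<forall>m\<in>insert u M. \<not> m \<le> t}"
    then obtain v where "t v < u v"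
      by (auto simp: le_fun_def not_le)
    moreover have "t \<in> {t. \<forall>m\<in>M. \<not> m \<le> t}"
      using t by simp
    then obtain W a where "(W, a) \<in> Q" "t \<in> box W a"
      unfolding Q(2) by auto
    ultimately have "((W, a), v, t v) \<in> Z" "t \<in> box (insert v W) (a(v := t v))"
      by (auto simp: Z_def box_def)
    moreover from this(1) have "(insert v W, a(v := t v)) \<in> Q'"
      unfolding Q'_def by (rule image_eqI[rotated]) simp
    ultimately show "t \<in> (\<Union>(W, a)\<in>Q'. box W a)"
      by blast
  next
    fix t assume "t \<in> (\<Union>(W, a)\<in>Q'. box W a)"
    then obtain W a v j where z: "(W, a) \<in> Q" "j < u v" "v \<notin> W \<or> a v = j"
      and t: "t \<in> box (insert v W) (a(v := j))"
      unfolding Q'_def Z_def by auto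
    from t z(3) have "t \<in> box W a" "t v < u v"
      using z(2) by (auto simp: box_def split: if_splits)
    then show "t \<in> {t. \<forall>m\<in>insert u M. \<not> m \<le> t}"
      using Q(2) z(1) by (auto simp: le_fun_def not_le)
  qed
  ultimately show ?case by blast
qed

text \<open>The degree \<open>mdeg\<close> of a monomial, with the exponent vector given as a plain function, so
  that the pointwise order on \<open>'v \<Rightarrow> nat\<close> (and with it Dickson's lemma) is available.\<close>
definition exp_deg :: "('v \<Rightarrow> 'g::comm_monoid_add) \<Rightarrow> ('v \<Rightarrow> nat) \<Rightarrow> 'g" where
  "exp_deg deg t = (\<Sum>v\<in>UNIV. nmul (t v) (deg v))"

lemma box_eq_range: "box W a = range (\<lambda>c v. if v \<in> W then a v else c v)"
proof (intro set_eqI iffI)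
  fix t assume "t \<in> box W a"
  then have "t = (\<lambda>v. if v \<in> W then a v else t v)"
    by (auto simp: box_def)
  then show "t \<in> range (\<lambda>c v. if v \<in> W then a v else c v)"
    by (rule range_eqI[where x = t])
qed (auto simp: box_def)

lemma exp_deg_box:
  fixes deg :: "'v::finite \<Rightarrow> 'g::comm_monoid_add"
  shows "exp_deg deg ` box W a =
    (\<lambda>x. (\<Sum>v\<in>W. nmul (a v) (deg v)) + x) ` submonoid_gen (deg ` (- W))"
proof -
  have "exp_deg deg (\<lambda>v. if v \<in> W then a v else c v)
      = (\<Sum>v\<in>W. nmul (a v) (deg v)) + (\<Sum>v\<in>- W. nmul (c v) (deg v))" for c
  proof -
    have "exp_deg deg (\<lambda>v. if v \<in> W then a v else c v)
        = (\<Sum>v\<in>UNIV. if v \<in> W then nmul (a v) (deg v) else nmul (c v) (deg v))"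
      unfolding exp_deg_def by (intro sum.cong) auto
    also have "\<dots> = (\<Sum>v\<in>W. nmul (a v) (deg v)) + (\<Sum>v\<in>- W. nmul (c v) (deg v))"
      by (simp add: sum.If_cases)
    finally show ?thesis .
  qed
  then show ?thesis
    unfolding box_eq_range submonoid_gen_image[OF finite] by (simp add: image_image)
qed

lemma cone_decomposable_exp_deg_downclosed:
  fixes S :: "('v::finite \<Rightarrow> nat) set" and deg :: "'v \<Rightarrow> 'g::cancel_comm_monoid_add"
  assumes "\<And>t s. t \<in> S \<Longrightarrow> s \<le> t \<Longrightarrow> s \<in> S"
  shows "cone_decomposable (range deg) (exp_deg deg ` S)"
proof -
  obtain Q where "finite Q" and avoid: "{t. \<forall>m\<in>minimals (- S). \<not> m \<le> t} = (\<Union>(W, a)\<in>Q. box W a)"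
    using avoid_finite_eq_UN_box[OF finite_minimals[of "- S"]] by blast
  have S: "S = (\<Union>(W, a)\<in>Q. box W a)"
    using downclosed_eq_avoid_minimals[OF assms] avoid by (rule trans)
  have "exp_deg deg ` S = (\<Union>(W, a)\<in>Q. exp_deg deg ` box W a)"
    unfolding S image_UN by (simp add: case_prod_beta)
  moreover have "cone_decomposable (range deg) (exp_deg deg ` box W a)" for W a
    unfolding exp_deg_box
    by (intro cone_decomposable_translate cone_decomposable_submonoid_gen) auto
  ultimately show ?thesis
    using \<open>finite Q\<close> by (auto intro: cone_decomposable_UN)
qed

lemma graded_module_sum_mem:
  assumes "graded_module deg scale Mg" "finite J" "\<And>i. i \<in> J \<Longrightarrow> w i \<in> Mg \<delta>"
  shows "sum w J \<in> Mg \<delta>"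
  using assms(2,3) by (induction J rule: finite_induct) (use assms(1) in \<open>simp_all add: graded_module_def\<close>)

lemma graded_sum_obtain_term_of_degree:
  assumes gm: "graded_module deg scale Mg" and "finite I"
    and y: "y \<in> Mg \<gamma>" "y \<noteq> 0" "y = (\<Sum>i\<in>I. z i)"
    and z: "\<And>i. i \<in> I \<Longrightarrow> z i \<in> Mg (g i)"
  obtains i where "i \<in> I" "g i = \<gamma>" "z i \<noteq> 0"
proof (rule ccontr)
  assume "\<not> thesis"
  then have z0: "\<forall>i\<in>I. g i = \<gamma> \<longrightarrow> z i = 0"
    using that by blast
  have unique: "\<exists>!f. finite {\<delta>. f \<delta> \<noteq> 0} \<and> (\<forall>\<delta>. f \<delta> \<in> Mg \<delta>) \<and> y = (\<Sum>\<delta>\<in>{\<delta>. f \<delta> \<noteq> 0}. f \<delta>)"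
    using gm unfolding graded_module_def by blast
  \<comment> \<open>grouping the terms by degree gives a homogeneous decomposition of \<open>y\<close> with no \<open>\<gamma>\<close>-part\<close>
  define f where "f \<delta> = (\<Sum>i\<in>{i\<in>I. g i = \<delta>}. z i)" for \<delta>
  have "f \<delta> \<in> Mg \<delta>" for \<delta>
    unfolding f_def using \<open>finite I\<close> z by (intro graded_module_sum_mem[OF gm]) auto
  moreover have supp: "{\<delta>. f \<delta> \<noteq> 0} \<subseteq> g ` I"
  proof
    fix \<delta> assume "\<delta> \<in> {\<delta>. f \<delta> \<noteq> 0}"
    then have "{i\<in>I. g i = \<delta>} \<noteq> {}"
      unfolding f_def by fastforce
    then show "\<delta> \<in> g ` I" by blast
  qed
  then have "finite {\<delta>. f \<delta> \<noteq> 0}"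
    by (rule finite_surj[OF \<open>finite I\<close>])
  moreover have "(\<Sum>\<delta>\<in>{\<delta>. f \<delta> \<noteq> 0}. f \<delta>) = (\<Sum>\<delta>\<in>g ` I. f \<delta>)"
    by (rule sum.mono_neutral_left) (use \<open>finite I\<close> supp in auto)
  then have "y = (\<Sum>\<delta>\<in>{\<delta>. f \<delta> \<noteq> 0}. f \<delta>)"
    unfolding f_def y(3) by (simp add: sum.image_gen[OF \<open>finite I\<close>, symmetric])
  moreover define f0 where "f0 \<delta> = (if \<delta> = \<gamma> then y else 0)" for \<delta>
  have "{\<delta>. f0 \<delta> \<noteq> 0} = {\<gamma>}"
    using y(2) by (auto simp: f0_def)
  then have "finite {\<delta>. f0 \<delta> \<noteq> 0} \<and> (\<forall>\<delta>. f0 \<delta> \<in> Mg \<delta>) \<and> y = (\<Sum>\<delta>\<in>{\<delta>. f0 \<delta> \<noteq> 0}. f0 \<delta>)"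
    using y(1) gm unfolding graded_module_def by (auto simp: f0_def)
  ultimately have "f = f0"
    using unique by blast
  moreover have "f \<gamma> = 0"
    unfolding f_def using z0 by (intro sum.neutral) auto
  ultimately show False
    using y(2) by (simp add: f0_def)
qed

lemma graded_module_homogeneous_generators:
  fixes deg :: "'v \<Rightarrow> 'g::comm_monoid_add" and Mg :: "'g \<Rightarrow> 'm::ab_group_add set"
  assumes gm: "graded_module deg scale Mg" and "fg_module scale"
  obtains H and dg :: "'m \<Rightarrow> 'g"
  where "finite H" "\<And>h. h \<in> H \<Longrightarrow> h \<in> Mg (dg h)" "module.span scale H = UNIV"
proof -
  interpret module scale
    using gm unfolding graded_module_def by blast
  obtain X where X: "finite X" "span X = UNIV"
    using assms(2) unfolding fg_module_def by blast
  define comp where "comp x = (THE f. finite {\<gamma>. f \<gamma> \<noteq> 0} \<and> (\<forall>\<gamma>. f \<gamma> \<in> Mg \<gamma>) \<and>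
      x = (\<Sum>\<gamma>\<in>{\<gamma>. f \<gamma> \<noteq> 0}. f \<gamma>))" for x
  have "\<exists>!f. finite {\<gamma>. f \<gamma> \<noteq> 0} \<and> (\<forall>\<gamma>. f \<gamma> \<in> Mg \<gamma>) \<and> x = (\<Sum>\<gamma>\<in>{\<gamma>. f \<gamma> \<noteq> 0}. f \<gamma>)" for x
    using gm unfolding graded_module_def by blast
  then have comp: "finite {\<gamma>. comp x \<gamma> \<noteq> 0} \<and> (\<forall>\<gamma>. comp x \<gamma> \<in> Mg \<gamma>) \<and>
      x = (\<Sum>\<gamma>\<in>{\<gamma>. comp x \<gamma> \<noteq> 0}. comp x \<gamma>)" for x
    unfolding comp_def by (rule theI')
  define H where "H = (\<Union>x\<in>X. comp x ` {\<gamma>. comp x \<gamma> \<noteq> 0})"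
  define dg where "dg h = (SOME \<gamma>. h \<in> Mg \<gamma>)" for h
  have "finite H"
    unfolding H_def using X(1) comp by blast
  moreover have "h \<in> Mg (dg h)" if "h \<in> H" for h
  proof -
    from that obtain x \<gamma> where "h = comp x \<gamma>"
      unfolding H_def by blast
    then have "h \<in> Mg \<gamma>"
      using comp by blast
    then show ?thesis
      unfolding dg_def by (rule someI)
  qed
  moreover have "X \<subseteq> span H"
  proof
    fix x assume "x \<in> X"
    then have "(\<Sum>\<gamma>\<in>{\<gamma>. comp x \<gamma> \<noteq> 0}. comp x \<gamma>) \<in> span H"
      unfolding H_def by (intro span_sum span_base) blast
    then show "x \<in> span H"
      using comp[of x] by simp
  qed
  then have "UNIV \<subseteq> span H"
    using X(2) span_mono[of X "span H"] by (simp add: span_span)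
  then have "span H = UNIV"
    by blast
  ultimately show thesis by (rule that)
qed

lemma poly_mapping_sum_single:
  "p = (\<Sum>k\<in>Poly_Mapping.keys p. Poly_Mapping.single k (Poly_Mapping.lookup p k))"
  by (rule poly_mapping_eqI) (simp add: lookup_sum lookup_single when_def in_keys_iff)

lemma mdeg_eq_exp_deg: "mdeg deg k = exp_deg deg (Poly_Mapping.lookup (k :: 'v::finite \<Rightarrow>\<^sub>0 nat))"
  unfolding mdeg_def exp_deg_def by (rule sum.mono_neutral_left) (auto simp: in_keys_iff)

lemma single_in_hom_poly: "Poly_Mapping.single k c \<in> hom_poly deg (mdeg deg k)"
  unfolding hom_poly_def by simp

definition monom_exp :: "('v::finite \<Rightarrow> nat) \<Rightarrow> ('v \<Rightarrow>\<^sub>0 nat) \<Rightarrow>\<^sub>0 'a::comm_ring_1" where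
  "monom_exp t = Poly_Mapping.single (Abs_poly_mapping t) 1"

definition nonzero_exps ::
  "((('v::finite \<Rightarrow>\<^sub>0 nat) \<Rightarrow>\<^sub>0 'a::comm_ring_1) \<Rightarrow> 'm \<Rightarrow> 'm::ab_group_add) \<Rightarrow> 'm \<Rightarrow> ('v \<Rightarrow> nat) set"
  where "nonzero_exps scale h = {t. scale (monom_exp t) h \<noteq> 0}"

lemma monom_exp_in_hom_poly: "monom_exp t \<in> hom_poly deg (exp_deg deg t)"
  using single_in_hom_poly[of "Abs_poly_mapping t" 1 deg] by (simp add: monom_exp_def mdeg_eq_exp_deg)

lemma nonzero_exps_downclosed:
  fixes scale :: "(('v::finite \<Rightarrow>\<^sub>0 nat) \<Rightarrow>\<^sub>0 'a::comm_ring_1) \<Rightarrow> 'm \<Rightarrow> 'm::ab_group_add"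
  assumes "module scale" "t \<in> nonzero_exps scale h" "s \<le> t"
  shows "s \<in> nonzero_exps scale h"
proof -
  interpret module scale by fact
  have "Abs_poly_mapping (t - s) + Abs_poly_mapping s = Abs_poly_mapping t"
    using \<open>s \<le> t\<close> by (intro poly_mapping_eqI) (simp add: lookup_add le_fun_def)
  then have "monom_exp t = monom_exp (t - s) * (monom_exp s :: ('v \<Rightarrow>\<^sub>0 nat) \<Rightarrow>\<^sub>0 'a)"
    by (simp add: monom_exp_def mult_single)
  then show ?thesis
    using assms(2) by (auto simp: nonzero_exps_def scale_scale[symmetric] simp del: scale_scale)
qed

lemma scale_single_nonzero_imp_nonzero_exps:
  fixes scale :: "(('v::finite \<Rightarrow>\<^sub>0 nat) \<Rightarrow>\<^sub>0 'a::comm_ring_1) \<Rightarrow> 'm \<Rightarrow> 'm::ab_group_add"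
  assumes "module scale" "scale (Poly_Mapping.single k c) h \<noteq> 0"
  shows "Poly_Mapping.lookup k \<in> nonzero_exps scale h"
proof -
  interpret module scale by fact
  have "Poly_Mapping.single k c = Poly_Mapping.single 0 c * monom_exp (Poly_Mapping.lookup k)"
    by (simp add: monom_exp_def mult_single)
  then show ?thesis
    using assms(2) by (auto simp: nonzero_exps_def scale_scale[symmetric] simp del: scale_scale)
qed

lemma translated_nonzero_exps_subset_graded_supp:
  fixes deg :: "'v::finite \<Rightarrow> 'g::comm_monoid_add"
  assumes gm: "graded_module deg scale Mg" and "h \<in> Mg \<delta>"
  shows "(\<lambda>x. \<delta> + x) ` exp_deg deg ` nonzero_exps scale h \<subseteq> graded_supp Mg"
proof clarify
  fix t assume "t \<in> nonzero_exps scale h"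
  moreover have "scale (monom_exp t) h \<in> Mg (exp_deg deg t + \<delta>)"
    using gm \<open>h \<in> Mg \<delta>\<close> monom_exp_in_hom_poly unfolding graded_module_def by blast
  ultimately show "\<delta> + exp_deg deg t \<in> graded_supp Mg"
    by (auto simp: graded_supp_def nonzero_exps_def add.commute)
qed

lemma graded_supp_subset_translated_nonzero_exps:
  fixes deg :: "'v::finite \<Rightarrow> 'g::comm_monoid_add"
  assumes gm: "graded_module deg scale Mg" and "finite H"
    and homogeneous: "\<And>h. h \<in> H \<Longrightarrow> h \<in> Mg (dg h)" and span: "module.span scale H = UNIV"
  shows "graded_supp Mg \<subseteq> (\<Union>h\<in>H. (\<lambda>x. dg h + x) ` exp_deg deg ` nonzero_exps scale h)"
proof
  interpret module scale
    using gm unfolding graded_module_def by blast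
  have hom: "\<And>\<gamma> \<delta> b x. b \<in> hom_poly deg \<gamma> \<Longrightarrow> x \<in> Mg \<delta> \<Longrightarrow> scale b x \<in> Mg (\<gamma> + \<delta>)"
    using gm unfolding graded_module_def by blast
  fix \<gamma> assume "\<gamma> \<in> graded_supp Mg"
  moreover have "0 \<in> Mg \<gamma>"
    using gm unfolding graded_module_def by simp
  ultimately obtain y where y: "y \<in> Mg \<gamma>" "y \<noteq> 0"
    unfolding graded_supp_def by blast
  obtain u where u: "y = (\<Sum>h\<in>H. scale (u h) h)"
    using span span_finite[OF \<open>finite H\<close>] by blast
  \<comment> \<open>expand each coefficient into its monomials: \<open>y\<close> becomes a finite sum of homogeneous terms\<close>
  define I where "I = (SIGMA h:H. Poly_Mapping.keys (u h))"
  define z where "z = (\<lambda>(h, k). scale (Poly_Mapping.single k (Poly_Mapping.lookup (u h) k)) h)"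
  have "finite I"
    unfolding I_def using \<open>finite H\<close> by auto
  moreover have "y = (\<Sum>i\<in>I. z i)"
    unfolding u I_def z_def
    by (subst sum.Sigma[symmetric]) (use \<open>finite H\<close> in \<open>auto intro!: sum.cong
        simp: scale_sum_left[symmetric] poly_mapping_sum_single[symmetric]\<close>)
  moreover have "z i \<in> Mg ((\<lambda>(h, k). mdeg deg k + dg h) i)" if "i \<in> I" for i
    using that homogeneous unfolding I_def z_def by (auto intro!: hom single_in_hom_poly)
  ultimately obtain i where i: "i \<in> I" "(\<lambda>(h, k). mdeg deg k + dg h) i = \<gamma>" "z i \<noteq> 0"
    by (rule graded_sum_obtain_term_of_degree[OF gm _ y])
  then obtain h k where hk: "h \<in> H" "mdeg deg k + dg h = \<gamma>"
    and "scale (Poly_Mapping.single k (Poly_Mapping.lookup (u h) k)) h \<noteq> 0"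
    unfolding I_def z_def by auto
  then have "Poly_Mapping.lookup k \<in> nonzero_exps scale h"
    using scale_single_nonzero_imp_nonzero_exps module_axioms by blast
  moreover have "\<gamma> = dg h + exp_deg deg (Poly_Mapping.lookup k)"
    using hk(2) by (simp add: mdeg_eq_exp_deg add.commute)
  ultimately show "\<gamma> \<in> (\<Union>h\<in>H. (\<lambda>x. dg h + x) ` exp_deg deg ` nonzero_exps scale h)"
    using hk(1) by blast
qed

theorem theorem4p3:
  fixes deg :: "'v::finite \<Rightarrow> 'g::ab_group_add"
    and scale :: "(('v \<Rightarrow>\<^sub>0 nat) \<Rightarrow>\<^sub>0 'a::comm_ring_1) \<Rightarrow> 'm \<Rightarrow> 'm::ab_group_add"
    and Mg :: "'g \<Rightarrow> 'm set"
  assumes "fg_abelian_group TYPE('g)"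
    and "graded_module deg scale Mg"
    and "fg_module scale"
  shows "\<exists>P :: ('g \<times> 'g set) set. finite P \<and>
           (\<forall>(\<delta>, E)\<in>P. E \<subseteq> range deg \<and> lin_indep E) \<and>
           graded_supp Mg = (\<Union>(\<delta>, E)\<in>P. (\<lambda>x. \<delta> + x) ` submonoid_gen E)"
proof -
  obtain H and dg :: "'m \<Rightarrow> 'g" where H: "finite H" "\<And>h. h \<in> H \<Longrightarrow> h \<in> Mg (dg h)"
    "module.span scale H = UNIV"
    using graded_module_homogeneous_generators[OF assms(2,3)] by blast
  have "module scale"
    using assms(2) unfolding graded_module_def by blast
  have "graded_supp Mg = (\<Union>h\<in>H. (\<lambda>x. dg h + x) ` exp_deg deg ` nonzero_exps scale h)"
    using graded_supp_subset_translated_nonzero_exps[OF assms(2) H]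
      translated_nonzero_exps_subset_graded_supp[OF assms(2) H(2)] by blast
  moreover have "cone_decomposable (range deg) \<dots>"
    using \<open>finite H\<close> nonzero_exps_downclosed[OF \<open>module scale\<close>]
    by (intro cone_decomposable_UN cone_decomposable_translate cone_decomposable_exp_deg_downclosed)
  ultimately show ?thesis
    unfolding cone_decomposable_def by simp
qed

end
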